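(* Let $\varphi:\mathbb R^d\to\mathbb R\cup\{+\infty\}$ be proper, convex, lsc and satisfy property (X) with some constant $D>0$. Let $C>0$ and $\alpha_0>0$. For $i=1,2$ let $\zeta_i\in W^{1,\infty}(0,\infty)^d$ solve $\alpha_i(t)\dot\zeta_i+\partial\varphi(\zeta_i)\ni g_i(t)$ a.e., $\zeta_i(0)=\zeta_{0i}$, with $\zeta_{0i}\in\mathcal D_C(\varphi)$, $\alpha_i\in L^\infty_{loc}(0,\infty)$, $\alpha_i\ge\alpha_0$ a.e., $g_i\in L^\infty(0,\infty)^d$, $|g_i(t)|\le C$ a.e. Then there exists a constant $L$ (depending on $C$ and $D$) such that for every $t\in(0,\infty)$ $$|\zeta_1-\zeta_2|(t)\le|\zeta_{01}-\zeta_{02}|+L\int_0^t\Big(\Big|\frac1{\alpha_1}-\frac1{\alpha_2}\Big|+|g_1-g_2|\Big)d\tau.$$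
   Context: $\mathcal D_C(\varphi)=\{\chi\in\mathrm{dom}\,\varphi:\exists\xi\in\partial\varphi(\chi),|\xi|\le C\}$. Property (X) with constant $D$: for every $C>0$, every $\zeta_0\in\mathcal D_C(\varphi)$, every $\alpha\in L^\infty_{loc}(0,\infty)$ with $\alpha\ge\alpha_0>0$ a.e. (some $\alpha_0$), and every $g\in L^\infty(0,\infty)^d$ with $|g|\le C$ a.e., the solution $\zeta\in W^{1,1}_{loc}(0,\infty)^d$ of $\alpha\zeta_t+\partial\varphi(\zeta)\ni g$ a.e., $\zeta(0)=\zeta_0$, satisfies $|g(t)-\alpha(t)\zeta_t(t)|\le DC$ a.e. *)

theory Defs
  imports "HOL-Analysis.Analysis"
begin

text \<open>Functions phi : R^d -> R \<union> {+infinity}, modelled as 'a => ereal on a Euclidean space.\<close>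

definition proper_fun :: "('a \<Rightarrow> ereal) \<Rightarrow> bool" where
  "proper_fun \<phi> \<longleftrightarrow> (\<exists>x. \<phi> x < \<infinity>) \<and> (\<forall>x. \<phi> x > -\<infinity>)"

definition convex_fun :: "('a::real_vector \<Rightarrow> ereal) \<Rightarrow> bool" where
  "convex_fun \<phi> \<longleftrightarrow> (\<forall>x y. \<forall>t::real. 0 \<le> t \<and> t \<le> 1 \<longrightarrow>
      \<phi> ((1 - t) *\<^sub>R x + t *\<^sub>R y) \<le> ereal (1 - t) * \<phi> x + ereal t * \<phi> y)"

definition lsc_fun :: "('a::topological_space \<Rightarrow> ereal) \<Rightarrow> bool" where
  "lsc_fun \<phi> \<longleftrightarrow> (\<forall>x. \<phi> x \<le> Liminf (at x) \<phi>)"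

definition dom_fun :: "('a \<Rightarrow> ereal) \<Rightarrow> 'a set" where
  "dom_fun \<phi> = {x. \<phi> x < \<infinity>}"

definition subdiff :: "('a::real_inner \<Rightarrow> ereal) \<Rightarrow> 'a \<Rightarrow> 'a set" where
  "subdiff \<phi> x = {\<xi>. x \<in> dom_fun \<phi> \<and> (\<forall>y. \<phi> x + ereal (\<xi> \<bullet> (y - x)) \<le> \<phi> y)}"

definition DC_set :: "('a::euclidean_space \<Rightarrow> ereal) \<Rightarrow> real \<Rightarrow> 'a set" where
  "DC_set \<phi> C = {x \<in> dom_fun \<phi>. \<exists>\<xi>\<in>subdiff \<phi> x. norm \<xi> \<le> C}"

definition Linf_loc :: "(real \<Rightarrow> real) \<Rightarrow> bool" where
  "Linf_loc \<alpha> \<longleftrightarrow> set_borel_measurable lborel {0<..} \<alpha> \<and>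
     (\<forall>T>0. \<exists>M. AE t in lborel. t \<in> {0<..T} \<longrightarrow> \<bar>\<alpha> t\<bar> \<le> M)"

text \<open>zeta in W^{1,1}_loc(0,infinity)^d with weak derivative v in L^1_loc, and zeta is a solution of
  alpha zeta_t + \<partial>phi(zeta) \<ni> g a.e., zeta(0) = zeta0 (zeta_t represented by v).\<close>
definition is_solution :: "('a::euclidean_space \<Rightarrow> ereal) \<Rightarrow> (real \<Rightarrow> real) \<Rightarrow> (real \<Rightarrow> 'a)
    \<Rightarrow> 'a \<Rightarrow> (real \<Rightarrow> 'a) \<Rightarrow> (real \<Rightarrow> 'a) \<Rightarrow> bool" where
  "is_solution \<phi> \<alpha> g \<zeta>0 \<zeta> v \<longleftrightarrow>
     \<zeta> 0 = \<zeta>0 \<and>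
     (\<forall>T>0. set_integrable lborel {0..T} v) \<and>
     (\<forall>t\<ge>0. \<zeta> t = \<zeta> 0 + (LINT s:{0..t}|lborel. v s)) \<and>
     (AE t in lborel. t > 0 \<longrightarrow> g t - \<alpha> t *\<^sub>R v t \<in> subdiff \<phi> (\<zeta> t))"

definition property_X :: "('a::euclidean_space \<Rightarrow> ereal) \<Rightarrow> real \<Rightarrow> bool" where
  "property_X \<phi> D \<longleftrightarrow>
    (\<forall>C>0. \<forall>\<zeta>0 \<in> DC_set \<phi> C. \<forall>\<alpha> g \<alpha>0 \<zeta> v.
       \<alpha>0 > 0 \<and> Linf_loc \<alpha> \<and> (AE t in lborel. t > 0 \<longrightarrow> \<alpha> t \<ge> \<alpha>0) \<and>
       set_borel_measurable lborel {0<..} g \<and> (AE t in lborel. t > 0 \<longrightarrow> norm (g t) \<le> C) \<and>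
       is_solution \<phi> \<alpha> g \<zeta>0 \<zeta> v
       \<longrightarrow> (AE t in lborel. t > 0 \<longrightarrow> norm (g t - \<alpha> t *\<^sub>R v t) \<le> D * C))"

text \<open>W^{1,infinity}(0,infinity)^d: bounded and Lipschitz on [0,infinity) (continuous representative).\<close>
definition W1inf :: "(real \<Rightarrow> 'a::euclidean_space) \<Rightarrow> bool" where
  "W1inf \<zeta> \<longleftrightarrow> bounded (\<zeta> ` {0..}) \<and> (\<exists>K. K-lipschitz_on {0..} \<zeta>)"

end

theory Submission
  imports Defs
begin

text \<open>Let \<open>w = \<zeta>\<^sub>1 - \<zeta>\<^sub>2\<close> and \<open>\<xi>\<^sub>i = g\<^sub>i - \<alpha>\<^sub>i \<zeta>\<^sub>i'\<close>, so that \<open>\<xi>\<^sub>i \<in> \<partial>\<phi>(\<zeta>\<^sub>i)\<close> a.e. and, by property (X),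
  \<open>|\<xi>\<^sub>i| \<le> DC\<close>.  Writing \<open>\<zeta>\<^sub>1' - \<zeta>\<^sub>2' = (1/\<alpha>\<^sub>1 - 1/\<alpha>\<^sub>2) \<alpha>\<^sub>1\<zeta>\<^sub>1' + (1/\<alpha>\<^sub>2)((g\<^sub>1 - g\<^sub>2) - (\<xi>\<^sub>1 - \<xi>\<^sub>2))\<close>
  and using monotonicity of \<open>\<partial>\<phi>\<close> gives, almost everywhere,
  \<open>\<langle>w', w\<rangle> \<le> |w| L (|1/\<alpha>\<^sub>1 - 1/\<alpha>\<^sub>2| + |g\<^sub>1 - g\<^sub>2|)\<close> with \<open>L = max (C + DC) (1/\<alpha>\<^sub>0)\<close>.
  A Gronwall-type lemma then yields \<open>|w(t)| \<le> |w(0)| + L \<integral>\<^sub>0\<^sup>t (\<dots>)\<close>.\<close>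

lemma integral_le_off_negligible:
  fixes f g :: "'a::euclidean_space \<Rightarrow> real"
  assumes "f integrable_on S" "g integrable_on S" "negligible N"
    and "\<And>x. x \<in> S - N \<Longrightarrow> f x \<le> g x"
  shows "integral S f \<le> integral S g"
proof -
  let ?f = "\<lambda>x. if x \<in> N then 0 else f x" and ?g = "\<lambda>x. if x \<in> N then 0 else g x"
  have "integral S f = integral S ?f" "integral S g = integral S ?g"
    by (rule integral_spike[OF assms(3)]; simp)+
  moreover have "integral S ?f \<le> integral S ?g"
  proof (rule integral_le)
    show "?f integrable_on S" "?g integrable_on S"
      by (rule integrable_spike[OF assms(1) assms(3)] integrable_spike[OF assms(2) assms(3)]; simp)+
  qed (use assms(4) in auto)
  ultimately show ?thesis by simp
qed

text \<open>An almost-everywhere statement for Lebesgue--Borel measure holds off a negligible set, the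
  form of exceptional set that the Henstock--Kurzweil lemmas accept.\<close>

lemma AE_lborel_negligible_exception:
  assumes "AE x in lborel. P x"
  obtains N where "negligible N" "\<And>x. x \<notin> N \<Longrightarrow> P x"
  using AE_completion[OF assms] unfolding eventually_ae_filter_negligible by blast

text \<open>If every increment of \<open>F\<close> is dominated by the corresponding increment of \<open>G\<close> up to an
  error quadratic in the step, then so is the total increment: telescope over \<open>n\<close> equal steps,
  where the accumulated error \<open>c t\<^sup>2 / n\<close> vanishes as \<open>n \<rightarrow> \<infinity>\<close>.\<close>

lemma increments_dominated_up_to_quadratic_error:
  fixes F G :: "real \<Rightarrow> real"
  assumes c: "c \<ge> 0"
    and incr: "\<And>s t. 0 \<le> s \<Longrightarrow> s \<le> t \<Longrightarrow> F t - F s \<le> G t - G s + c * (t - s)^2"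
    and t: "t \<ge> 0"
  shows "F t - F 0 \<le> G t - G 0"
proof (rule field_le_epsilon)
  fix e :: real assume e: "e > 0"
  obtain n :: nat where n: "c * t^2 / e < real n" using reals_Archimedean2 by blast
  have "0 \<le> c * t^2 / e" using c e by simp
  with n have n_pos: "n > 0" by simp
  define \<delta> where "\<delta> = t / real n"
  have \<delta>: "\<delta> \<ge> 0" "real n * \<delta> = t" unfolding \<delta>_def using t n_pos by auto
  have telescoped: "F (real k * \<delta>) - F 0 \<le> G (real k * \<delta>) - G 0 + real k * (c * \<delta>^2)" for k
  proof (induction k)
    case (Suc k)
    have "F (real (Suc k) * \<delta>) - F (real k * \<delta>) \<le> G (real (Suc k) * \<delta>) - G (real k * \<delta>) + c * \<delta>^2"
      using incr[of "real k * \<delta>" "real (Suc k) * \<delta>"] \<delta>(1) by (simp add: algebra_simps)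
    with Suc.IH show ?case by (simp add: algebra_simps)
  qed simp
  have "real n * (c * \<delta>^2) = c * t^2 / real n"
    unfolding \<delta>_def using n_pos by (simp add: field_simps power2_eq_square)
  also have "\<dots> < e" using n e n_pos by (simp add: divide_less_eq mult.commute pos_divide_less_eq)
  finally show "F t - F 0 \<le> G t - G 0 + e" using telescoped[of n] \<delta>(2) by simp
qed

context
  fixes w V :: "real \<Rightarrow> 'a::euclidean_space" and h :: "real \<Rightarrow> real" and K M H :: real
  assumes lipschitz: "K-lipschitz_on {0..} w"
    and primitive: "\<And>s t. 0 \<le> s \<Longrightarrow> s \<le> t \<Longrightarrow> (V has_integral (w t - w s)) {s..t}"
    and h_integrable: "\<And>t. h integrable_on {0..t}"
    and h_nonneg: "\<And>x. 0 \<le> h x"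
    and M_nonneg: "0 \<le> M" and H_nonneg: "0 \<le> H"
    and pointwise: "AE x in lborel. x > 0 \<longrightarrow>
                      V x \<bullet> w x \<le> norm (w x) * h x \<and> norm (V x) \<le> M \<and> h x \<le> H"
begin

lemma h_integrable_interval: "0 \<le> s \<Longrightarrow> h integrable_on {s..t}"
  by (rule integrable_subinterval_real[OF h_integrable[of t]]) auto

text \<open>Increment of \<open>|w|\<^sup>2\<close> over \<open>[s, t]\<close>: integrating \<open>\<langle>V, w(t) + w(s)\<rangle>\<close> and comparing
  \<open>w(t) + w(s)\<close> with \<open>2 w(\<tau>)\<close> costs an error of order \<open>(t - s)\<^sup>2\<close>.\<close>

lemma sq_norm_increment:
  assumes st: "0 \<le> s" "s \<le> t"
  shows "norm (w t)^2 - norm (w s)^2 \<le> (norm (w s) + norm (w t)) * integral {s..t} h + K * (H + M) * (t - s)^2"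
proof -
  obtain N where N: "negligible N"
    and pw: "\<And>x. x \<notin> N \<Longrightarrow> x > 0 \<Longrightarrow> V x \<bullet> w x \<le> norm (w x) * h x \<and> norm (V x) \<le> M \<and> h x \<le> H"
    using AE_lborel_negligible_exception[OF pointwise] by blast
  have K: "K \<ge> 0" using lipschitz_on_nonneg[OF lipschitz] .
  define d where "d = w t + w s"
  define B where "B = (\<lambda>\<tau>. (norm (w s) + norm (w t)) * h \<tau> + K * (H + M) * (t - s))"
  have V_d: "((\<lambda>\<tau>. V \<tau> \<bullet> d) has_integral (w t - w s) \<bullet> d) {s..t}"
    using has_integral_linear[OF primitive[OF st] bounded_linear_inner_left[of d]] by (simp add: o_def)
  have "norm (w t)^2 - norm (w s)^2 = (w t - w s) \<bullet> d"
    by (simp add: d_def power2_norm_eq_inner inner_add_right inner_diff_left inner_diff_right inner_commute)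
  also have "\<dots> = integral {s..t} (\<lambda>\<tau>. V \<tau> \<bullet> d)"
    using integral_unique[OF V_d] by simp
  also have "\<dots> \<le> integral {s..t} B"
  proof (rule integral_le_off_negligible[OF _ _ negligible_insert[THEN iffD2, OF N, of 0]])
    show "(\<lambda>\<tau>. V \<tau> \<bullet> d) integrable_on {s..t}"
      using V_d by blast
    show "B integrable_on {s..t}" unfolding B_def
      by (intro integrable_add integrable_on_mult_right h_integrable_interval integrable_const_ivl st)
  next
    fix \<tau> assume \<tau>: "\<tau> \<in> {s..t} - insert 0 N"
    then have V_w: "V \<tau> \<bullet> w \<tau> \<le> norm (w \<tau>) * h \<tau>" and V_M: "norm (V \<tau>) \<le> M" and h_H: "h \<tau> \<le> H"
      using pw[of \<tau>] st by auto
    have l1: "norm (w \<tau> - w s) \<le> K * (\<tau> - s)" and l2: "norm (w t - w \<tau>) \<le> K * (t - \<tau>)"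
      using lipschitz_on_normD[OF lipschitz, of \<tau> s] lipschitz_on_normD[OF lipschitz, of t \<tau>] \<tau> st by auto
    \<comment> \<open>Write \<open>d = 2 w(\<tau>) + r\<close>; Lipschitz continuity makes \<open>r\<close> and \<open>2|w(\<tau>)| - |w s| - |w t|\<close> of order \<open>t - s\<close>.\<close>
    define r where "r = (w t - w \<tau>) - (w \<tau> - w s)"
    have split: "V \<tau> \<bullet> d = 2 * (V \<tau> \<bullet> w \<tau>) + V \<tau> \<bullet> r"
      by (simp add: d_def r_def inner_diff_right inner_add_right)
    have "norm r \<le> K * (t - s)"
      using norm_triangle_ineq4[of "w t - w \<tau>" "w \<tau> - w s"] l1 l2 unfolding r_def by (simp add: algebra_simps)
    then have rem: "V \<tau> \<bullet> r \<le> M * (K * (t - s))"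
      using norm_cauchy_schwarz[of "V \<tau>" r] mult_mono[OF V_M _ M_nonneg norm_ge_zero] by force
    have "2 * norm (w \<tau>) \<le> norm (w s) + norm (w t) + K * (t - s)"
      using norm_triangle_sub[of "w \<tau>" "w s"] norm_triangle_sub[of "w \<tau>" "w t"] l1 l2
        norm_minus_commute[of "w \<tau>" "w t"] by (simp add: algebra_simps)
    then have "2 * (V \<tau> \<bullet> w \<tau>) \<le> (norm (w s) + norm (w t)) * h \<tau> + K * (t - s) * h \<tau>"
      using V_w mult_right_mono[OF _ h_nonneg[of \<tau>]] by (force simp: algebra_simps)
    also have "\<dots> \<le> (norm (w s) + norm (w t)) * h \<tau> + K * (t - s) * H"
      using mult_left_mono[OF h_H, of "K * (t - s)"] K st by simp
    finally show "V \<tau> \<bullet> d \<le> B \<tau>"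
      using split rem unfolding B_def by (simp add: algebra_simps)
  qed
  also have "integral {s..t} B = (norm (w s) + norm (w t)) * integral {s..t} h + K * (H + M) * (t - s)^2"
    unfolding B_def using st
    by (subst integral_add) (auto intro: integrable_on_mult_right h_integrable_interval simp: power2_eq_square)
  finally show ?thesis .
qed

text \<open>The regularised norm \<open>u = sqrt(|w|\<^sup>2 + \<epsilon>\<^sup>2)\<close> is bounded below by \<open>\<epsilon>\<close>, so dividing the
  previous estimate by \<open>u s + u t\<close> turns it into an increment bound with quadratic error.\<close>

lemma regularized_norm_increment:
  assumes \<epsilon>: "\<epsilon> > 0" and st: "0 \<le> s" "s \<le> t"
  shows "sqrt (norm (w t)^2 + \<epsilon>^2) - sqrt (norm (w s)^2 + \<epsilon>^2)
           \<le> integral {s..t} h + K * (H + M) / (2 * \<epsilon>) * (t - s)^2"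
proof -
  define u where "u x = sqrt (norm (w x)^2 + \<epsilon>^2)" for x
  have u_ge: "norm (w x) \<le> u x" "\<epsilon> \<le> u x" for x
    unfolding u_def using \<epsilon> by (auto intro: real_le_rsqrt)
  have u_sq: "(u x)^2 = norm (w x)^2 + \<epsilon>^2" for x
    unfolding u_def by simp
  define I where "I = integral {s..t} h"
  define Q where "Q = K * (H + M) * (t - s)^2"
  define P where "P = u s + u t"
  have I_nonneg: "0 \<le> I" unfolding I_def by (rule integral_nonneg[OF h_integrable_interval[OF st(1)] h_nonneg])
  have Q_nonneg: "0 \<le> Q"
    unfolding Q_def using lipschitz_on_nonneg[OF lipschitz] M_nonneg H_nonneg by simp
  have P_ge: "2 * \<epsilon> \<le> P" unfolding P_def using u_ge(2)[of s] u_ge(2)[of t] by simp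
  have "(u t - u s) * P = (u t)^2 - (u s)^2"
    unfolding P_def by (simp add: algebra_simps power2_eq_square)
  also have "\<dots> = norm (w t)^2 - norm (w s)^2"
    by (simp add: u_sq)
  also have "\<dots> \<le> (norm (w s) + norm (w t)) * I + Q"
    unfolding I_def Q_def by (rule sq_norm_increment[OF st])
  also have "\<dots> \<le> P * I + Q"
    unfolding P_def using mult_right_mono[OF add_mono[OF u_ge(1)[of s] u_ge(1)[of t]] I_nonneg] by simp
  finally have "u t - u s \<le> I + Q / P"
    using P_ge \<epsilon> by (simp add: field_simps)
  also have "Q / P \<le> Q / (2 * \<epsilon>)"
    using Q_nonneg P_ge \<epsilon> by (intro divide_left_mono) auto
  finally show ?thesis unfolding u_def I_def Q_def by simp
qed

text \<open>The a.e. chain rule for \<open>|w|\<close> is avoided by telescoping the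
  regularised increments and letting the regularisation parameter tend to zero.\<close>

lemma norm_growth_bound:
  assumes t: "t \<ge> 0"
  shows "norm (w t) \<le> norm (w 0) + integral {0..t} h"
proof (rule field_le_epsilon)
  fix \<epsilon> :: real assume \<epsilon>: "\<epsilon> > 0"
  define u where "u x = sqrt (norm (w x)^2 + \<epsilon>^2)" for x
  have "u t - u 0 \<le> integral {0..t} h - integral {0..0} h"
  proof (rule increments_dominated_up_to_quadratic_error[OF _ _ t])
    show "0 \<le> K * (H + M) / (2 * \<epsilon>)"
      using lipschitz_on_nonneg[OF lipschitz] M_nonneg H_nonneg \<epsilon> by simp
    fix s r :: real assume sr: "0 \<le> s" "s \<le> r"
    have "integral {0..s} h + integral {s..r} h = integral {0..r} h"
      using sr h_integrable[of r] by (intro Henstock_Kurzweil_Integration.integral_combine) auto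
    then show "u r - u s \<le> integral {0..r} h - integral {0..s} h + K * (H + M) / (2 * \<epsilon>) * (r - s)^2"
      using regularized_norm_increment[OF \<epsilon> sr] unfolding u_def by simp
  qed
  moreover have "norm (w t) \<le> u t"
    unfolding u_def by (rule real_le_rsqrt) simp
  moreover have "u 0 \<le> norm (w 0) + \<epsilon>"
    unfolding u_def using \<epsilon> by (intro real_le_lsqrt) (auto simp: power2_sum)
  ultimately show "norm (w t) \<le> norm (w 0) + integral {0..t} h + \<epsilon>"
    by simp
qed

end

lemma subdiff_monotone:
  fixes \<phi> :: "'a::real_inner \<Rightarrow> ereal"
  assumes "proper_fun \<phi>" "\<xi>1 \<in> subdiff \<phi> x1" "\<xi>2 \<in> subdiff \<phi> x2"
  shows "(\<xi>1 - \<xi>2) \<bullet> (x1 - x2) \<ge> 0"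
proof -
  have fin: "\<phi> x1 < \<infinity>" "\<phi> x2 < \<infinity>" "\<phi> x1 > -\<infinity>" "\<phi> x2 > -\<infinity>"
    and sub1: "\<phi> x1 + ereal (\<xi>1 \<bullet> (x2 - x1)) \<le> \<phi> x2"
    and sub2: "\<phi> x2 + ereal (\<xi>2 \<bullet> (x1 - x2)) \<le> \<phi> x1"
    using assms unfolding subdiff_def dom_fun_def proper_fun_def by auto
  obtain r1 r2 where r: "\<phi> x1 = ereal r1" "\<phi> x2 = ereal r2"
    using fin by (cases "\<phi> x1"; cases "\<phi> x2") auto
  have "r1 + \<xi>1 \<bullet> (x2 - x1) \<le> r2" "r2 + \<xi>2 \<bullet> (x1 - x2) \<le> r1"
    using sub1 sub2 unfolding r by simp_all
  moreover have "(\<xi>1 - \<xi>2) \<bullet> (x1 - x2) = - (\<xi>1 \<bullet> (x2 - x1)) - \<xi>2 \<bullet> (x1 - x2)"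
    by (simp add: inner_diff_left inner_diff_right)
  ultimately show ?thesis by linarith
qed

lemma equation_velocity_bound:
  fixes g v :: "'a::real_normed_vector"
  assumes "\<alpha>0 > 0" "\<alpha>0 \<le> a" "norm g \<le> C" "norm (g - a *\<^sub>R v) \<le> D * C"
  shows "norm (a *\<^sub>R v) \<le> C + D * C" "norm v \<le> (C + D * C) / \<alpha>0"
proof -
  show av: "norm (a *\<^sub>R v) \<le> C + D * C"
    using norm_triangle_ineq4[of g "g - a *\<^sub>R v"] assms(3,4) by simp
  have "\<alpha>0 * norm v \<le> a * norm v"
    using assms(2) by (simp add: mult_right_mono)
  also have "\<dots> \<le> C + D * C" using av assms(1,2) by simp
  finally show "norm v \<le> (C + D * C) / \<alpha>0"
    using assms(1) by (simp add: pos_le_divide_eq mult.commute)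
qed

text \<open>The integrand of the estimate is bounded for admissible data, hence locally integrable.\<close>

lemma forcing_difference_bound:
  fixes g1 g2 :: "'a::real_normed_vector"
  assumes "\<alpha>0 > 0" "\<alpha>0 \<le> a1" "\<alpha>0 \<le> a2" "norm g1 \<le> C" "norm g2 \<le> C"
  shows "\<bar>1 / a1 - 1 / a2\<bar> + norm (g1 - g2) \<le> 2 / \<alpha>0 + 2 * C"
proof -
  have "0 \<le> 1 / a1" "1 / a1 \<le> 1 / \<alpha>0" "0 \<le> 1 / a2" "1 / a2 \<le> 1 / \<alpha>0"
    using assms(1-3) by (auto intro: divide_left_mono)
  moreover have "2 / \<alpha>0 = 1 / \<alpha>0 + 1 / \<alpha>0" by simp
  ultimately have "\<bar>1 / a1 - 1 / a2\<bar> \<le> 2 / \<alpha>0" by (simp only: abs_le_iff) linarith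
  moreover have "norm (g1 - g2) \<le> 2 * C"
    using norm_triangle_ineq4[of g1 g2] assms(4,5) by simp
  ultimately show ?thesis by linarith
qed

text \<open>With \<open>\<xi>\<^sub>i = g\<^sub>i - a\<^sub>i v\<^sub>i\<close> one has
  \<open>v\<^sub>1 - v\<^sub>2 = (1/a\<^sub>1 - 1/a\<^sub>2) a\<^sub>1 v\<^sub>1 + (1/a\<^sub>2) ((g\<^sub>1 - g\<^sub>2) - (\<xi>\<^sub>1 - \<xi>\<^sub>2))\<close>; the last term has a good
  sign by monotonicity and the others are controlled by \<open>|a\<^sub>1 v\<^sub>1| \<le> C + DC\<close> and \<open>1/a\<^sub>2 \<le> 1/\<alpha>\<^sub>0\<close>.\<close>

lemma velocity_difference_estimate:
  fixes g1 g2 v1 v2 x1 x2 :: "'a::real_inner"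
  assumes \<alpha>0: "\<alpha>0 > 0" "\<alpha>0 \<le> a1" "\<alpha>0 \<le> a2"
    and g: "norm g1 \<le> C"
    and \<xi>: "norm (g1 - a1 *\<^sub>R v1) \<le> D * C"
    and mono: "((g1 - a1 *\<^sub>R v1) - (g2 - a2 *\<^sub>R v2)) \<bullet> (x1 - x2) \<ge> 0"
    and L: "C + D * C \<le> L" "1 / \<alpha>0 \<le> L"
  shows "(v1 - v2) \<bullet> (x1 - x2) \<le> norm (x1 - x2) * (L * (\<bar>1 / a1 - 1 / a2\<bar> + norm (g1 - g2)))"
proof -
  define W where "W = x1 - x2"
  define p where "p = a1 *\<^sub>R v1"
  define \<xi>1 \<xi>2 where "\<xi>1 = g1 - p" and "\<xi>2 = g2 - a2 *\<^sub>R v2"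
  have a_pos: "a1 > 0" "a2 > 0" using \<alpha>0 by auto
  have "v1 - v2 = (1/a1 - 1/a2) *\<^sub>R p + (1/a2) *\<^sub>R ((g1 - g2) - (\<xi>1 - \<xi>2))"
    using a_pos unfolding \<xi>1_def \<xi>2_def p_def by (simp add: algebra_simps)
  then have split: "(v1 - v2) \<bullet> W = (1/a1 - 1/a2) * (p \<bullet> W)
      + (1/a2) * ((g1 - g2) \<bullet> W) - (1/a2) * ((\<xi>1 - \<xi>2) \<bullet> W)"
    by (simp only: inner_add_left inner_diff_left inner_scaleR_left right_diff_distrib)
  have "\<bar>p \<bullet> W\<bar> \<le> L * norm W"
    using Cauchy_Schwarz_ineq2[of p W] equation_velocity_bound(1)[OF \<alpha>0(1,2) g \<xi>] L(1)
      mult_right_mono[of _ L "norm W"] unfolding p_def by (meson norm_ge_zero order_trans)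
  then have coefficient_term: "(1/a1 - 1/a2) * (p \<bullet> W) \<le> \<bar>1/a1 - 1/a2\<bar> * (L * norm W)"
    using abs_ge_self[of "(1/a1 - 1/a2) * (p \<bullet> W)"] mult_left_mono[of _ _ "\<bar>1/a1 - 1/a2\<bar>"]
    by (fastforce simp: abs_mult)
  have inverse_le: "1 / a2 \<le> L"
    using divide_left_mono[of \<alpha>0 a2 1] \<alpha>0 L(2) by simp
  have "(1/a2) * ((g1 - g2) \<bullet> W) \<le> (1/a2) * (norm (g1 - g2) * norm W)"
    using norm_cauchy_schwarz[of "g1 - g2" W] a_pos by (intro mult_left_mono) auto
  also have "\<dots> \<le> L * (norm (g1 - g2) * norm W)"
    using inverse_le by (intro mult_right_mono) auto
  finally have forcing_term: "(1/a2) * ((g1 - g2) \<bullet> W) \<le> L * (norm (g1 - g2) * norm W)" .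
  have monotone_term: "(1/a2) * ((\<xi>1 - \<xi>2) \<bullet> W) \<ge> 0"
    using mono a_pos unfolding \<xi>1_def \<xi>2_def W_def p_def by simp
  show ?thesis
    using split coefficient_term forcing_term monotone_term unfolding W_def by (simp add: algebra_simps)
qed

lemma solution_increment_has_integral:
  assumes sol: "is_solution \<phi> \<alpha> g \<zeta>0 \<zeta> v" and st: "0 \<le> s" "s \<le> t"
  shows "(v has_integral (\<zeta> t - \<zeta> s)) {s..t}"
proof -
  have integrable: "\<forall>T>0. set_integrable lborel {0..T} v"
    using sol unfolding is_solution_def by (elim conjE)
  have primitive: "\<forall>t\<ge>0. \<zeta> t = \<zeta> 0 + (LINT s:{0..t}|lborel. v s)"
    using sol unfolding is_solution_def by (elim conjE)
  have from_zero: "(v has_integral (\<zeta> r - \<zeta> 0)) {0..r}" if r: "r \<ge> 0" for r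
  proof -
    have "set_integrable lborel {0..r} v"
      by (rule set_integrable_subset[of _ "{0..r+1}"]) (use integrable r in auto)
    from set_borel_integral_eq_integral[OF this] show ?thesis
      using primitive[rule_format, OF r] by (simp add: has_integral_iff)
  qed
  have "v integrable_on {s..t}"
    by (rule integrable_subinterval_real[OF has_integral_integrable[OF from_zero[of t]]]) (use st in auto)
  then have J: "(v has_integral integral {s..t} v) {s..t}" by (rule integrable_integral)
  have "(v has_integral (\<zeta> s - \<zeta> 0) + integral {s..t} v) {0..t}"
    using has_integral_combine[OF st from_zero[OF st(1)] J] .
  then have "\<zeta> t - \<zeta> 0 = (\<zeta> s - \<zeta> 0) + integral {s..t} v"
    using st by (intro has_integral_unique[OF from_zero[of t]]) auto
  with J show ?thesis by (simp add: algebra_simps)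
qed

definition controlled_solution ::
    "('a::euclidean_space \<Rightarrow> ereal) \<Rightarrow> real \<Rightarrow> real \<Rightarrow> real \<Rightarrow> (real \<Rightarrow> real) \<Rightarrow> (real \<Rightarrow> 'a)
      \<Rightarrow> (real \<Rightarrow> 'a) \<Rightarrow> (real \<Rightarrow> 'a) \<Rightarrow> bool" where
  "controlled_solution \<phi> D C \<alpha>0 \<alpha> g \<zeta> v \<longleftrightarrow>
     (AE t in lborel. t > 0 \<longrightarrow> \<alpha>0 \<le> \<alpha> t \<and> norm (g t) \<le> C \<and>
        g t - \<alpha> t *\<^sub>R v t \<in> subdiff \<phi> (\<zeta> t) \<and> norm (g t - \<alpha> t *\<^sub>R v t) \<le> D * C)"

lemma controlled_solution_of_property_X:
  assumes X: "property_X \<phi> D" and C: "C > 0" and \<alpha>0: "\<alpha>0 > 0" and init: "\<zeta>0 \<in> DC_set \<phi> C"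
    and \<alpha>: "Linf_loc \<alpha>" "AE t in lborel. t > 0 \<longrightarrow> \<alpha>0 \<le> \<alpha> t"
    and g: "set_borel_measurable lborel {0<..} g" "AE t in lborel. t > 0 \<longrightarrow> norm (g t) \<le> C"
    and sol: "is_solution \<phi> \<alpha> g \<zeta>0 \<zeta> v"
  shows "controlled_solution \<phi> D C \<alpha>0 \<alpha> g \<zeta> v"
proof -
  have "AE t in lborel. t > 0 \<longrightarrow> norm (g t - \<alpha> t *\<^sub>R v t) \<le> D * C"
    using X[unfolded property_X_def, rule_format, OF C init, of \<alpha>0 \<alpha> g \<zeta> v] \<alpha>0 \<alpha> g sol by blast
  moreover have "AE t in lborel. t > 0 \<longrightarrow> g t - \<alpha> t *\<^sub>R v t \<in> subdiff \<phi> (\<zeta> t)"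
    using sol unfolding is_solution_def by blast
  ultimately show ?thesis
    using \<alpha>(2) g(2) unfolding controlled_solution_def by eventually_elim blast
qed

lemma forcing_difference_integrable:
  fixes \<alpha>1 \<alpha>2 :: "real \<Rightarrow> real" and g1 g2 :: "real \<Rightarrow> 'a::euclidean_space"
  assumes \<alpha>0: "\<alpha>0 > 0"
    and \<alpha>: "Linf_loc \<alpha>1" "Linf_loc \<alpha>2"
      "AE t in lborel. t > 0 \<longrightarrow> \<alpha>0 \<le> \<alpha>1 t" "AE t in lborel. t > 0 \<longrightarrow> \<alpha>0 \<le> \<alpha>2 t"
    and g: "set_borel_measurable lborel {0<..} g1" "set_borel_measurable lborel {0<..} g2"
      "AE t in lborel. t > 0 \<longrightarrow> norm (g1 t) \<le> C" "AE t in lborel. t > 0 \<longrightarrow> norm (g2 t) \<le> C"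
  shows "set_integrable lborel {0..T} (\<lambda>\<tau>. \<bar>1 / \<alpha>1 \<tau> - 1 / \<alpha>2 \<tau>\<bar> + norm (g1 \<tau> - g2 \<tau>))"
proof -
  define k where "k \<tau> = \<bar>1 / \<alpha>1 \<tau> - 1 / \<alpha>2 \<tau>\<bar> + norm (g1 \<tau> - g2 \<tau>)" for \<tau>
  \<comment> \<open>Measurability is only known on \<open>(0, \<infinity>)\<close>, so work on \<open>(0, T]\<close> and add the point \<open>0\<close> at the end.\<close>
  let ?cut = "\<lambda>x. indicator {0<..} x :: real"
  have [measurable]: "(\<lambda>x. ?cut x *\<^sub>R \<alpha>1 x) \<in> borel_measurable lborel" "(\<lambda>x. ?cut x *\<^sub>R \<alpha>2 x) \<in> borel_measurable lborel"
    "(\<lambda>x. ?cut x *\<^sub>R g1 x) \<in> borel_measurable lborel" "(\<lambda>x. ?cut x *\<^sub>R g2 x) \<in> borel_measurable lborel"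
    using \<alpha>(1,2) g(1,2) unfolding Linf_loc_def set_borel_measurable_def by auto
  have restricted: "(\<lambda>x. indicator {0<..T} x *\<^sub>R k x) = (\<lambda>x. indicator {0<..T} x *\<^sub>R
      (\<bar>1 / (?cut x *\<^sub>R \<alpha>1 x) - 1 / (?cut x *\<^sub>R \<alpha>2 x)\<bar> + norm (?cut x *\<^sub>R g1 x - ?cut x *\<^sub>R g2 x)))"
    by (auto simp: k_def indicator_def)
  have finite_measure: "emeasure lborel {0<..T} < \<infinity>"
    by (cases "0 \<le> T") auto
  have "set_integrable lborel {0<..T} (\<lambda>_. 2 / \<alpha>0 + 2 * C)"
    unfolding set_integrable_def using finite_measure
    by (intro integrable_scaleR_left integrable_real_indicator) auto
  moreover have "set_borel_measurable lborel {0<..T} k"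
    unfolding set_borel_measurable_def restricted by measurable
  moreover have "AE x in lborel. x \<in> {0<..T} \<longrightarrow> norm (k x) \<le> norm (2 / \<alpha>0 + 2 * C)"
    using \<alpha>(3,4) g(3,4)
  proof eventually_elim
    case (elim x)
    show ?case
      using forcing_difference_bound[OF \<alpha>0, of "\<alpha>1 x" "\<alpha>2 x" "g1 x" C "g2 x"] elim unfolding k_def by auto
  qed
  ultimately have "set_integrable lborel {0<..T} k"
    by (rule set_integrable_bound)
  then show ?thesis
    unfolding k_def[symmetric] by (subst set_integrable_discrete_difference[where X = "{0}"]) auto
qed

text \<open>For two controlled solutions the difference \<open>w = \<zeta>\<^sub>1 - \<zeta>\<^sub>2\<close> satisfies, almost everywhere, the
  hypotheses of \<open>norm_growth_bound\<close> with \<open>h = L k\<close>.\<close>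

lemma controlled_solutions_pointwise:
  fixes \<phi> :: "'a::euclidean_space \<Rightarrow> ereal" and \<zeta>1 \<zeta>2 v1 v2 g1 g2 :: "real \<Rightarrow> 'a"
    and \<alpha>1 \<alpha>2 :: "real \<Rightarrow> real"
  defines "k \<equiv> \<lambda>\<tau>. \<bar>1 / \<alpha>1 \<tau> - 1 / \<alpha>2 \<tau>\<bar> + norm (g1 \<tau> - g2 \<tau>)"
  assumes proper: "proper_fun \<phi>"
    and controlled: "controlled_solution \<phi> D C \<alpha>0 \<alpha>1 g1 \<zeta>1 v1" "controlled_solution \<phi> D C \<alpha>0 \<alpha>2 g2 \<zeta>2 v2"
    and \<alpha>0: "\<alpha>0 > 0" and L: "C + D * C \<le> L" "1 / \<alpha>0 \<le> L"
  shows "AE x in lborel. x > 0 \<longrightarrow>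
      (v1 x - v2 x) \<bullet> (\<zeta>1 x - \<zeta>2 x) \<le> norm (\<zeta>1 x - \<zeta>2 x) * (L * k x) \<and>
      norm (v1 x - v2 x) \<le> 2 * ((C + D * C) / \<alpha>0) \<and> L * k x \<le> L * (2 / \<alpha>0 + 2 * C)"
  using controlled unfolding controlled_solution_def
proof eventually_elim
  case (elim x)
  have L_nonneg: "0 \<le> L" using L(2) \<alpha>0 by (meson less_imp_le order_trans zero_le_divide_1_iff)
  show ?case
  proof (intro impI conjI)
    assume "x > 0"
    then have x: "\<alpha>0 \<le> \<alpha>1 x" "norm (g1 x) \<le> C" "g1 x - \<alpha>1 x *\<^sub>R v1 x \<in> subdiff \<phi> (\<zeta>1 x)"
      "norm (g1 x - \<alpha>1 x *\<^sub>R v1 x) \<le> D * C"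
      "\<alpha>0 \<le> \<alpha>2 x" "norm (g2 x) \<le> C" "g2 x - \<alpha>2 x *\<^sub>R v2 x \<in> subdiff \<phi> (\<zeta>2 x)"
      "norm (g2 x - \<alpha>2 x *\<^sub>R v2 x) \<le> D * C"
      using elim by auto
    show "(v1 x - v2 x) \<bullet> (\<zeta>1 x - \<zeta>2 x) \<le> norm (\<zeta>1 x - \<zeta>2 x) * (L * k x)"
      unfolding k_def using velocity_difference_estimate[OF \<alpha>0 x(1,5,2,4) subdiff_monotone[OF proper x(3,7)] L] .
    show "norm (v1 x - v2 x) \<le> 2 * ((C + D * C) / \<alpha>0)"
      unfolding mult_2 using equation_velocity_bound(2)[OF \<alpha>0 x(1,2,4)]
        equation_velocity_bound(2)[OF \<alpha>0 x(5,6,8)] by (rule order_trans[OF norm_triangle_ineq4 add_mono])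
    show "L * k x \<le> L * (2 / \<alpha>0 + 2 * C)"
      unfolding k_def using forcing_difference_bound[OF \<alpha>0 x(1,5,2,6)] L_nonneg by (rule mult_left_mono)
  qed
qed

lemma controlled_solutions_comparison:
  fixes \<phi> :: "'a::euclidean_space \<Rightarrow> ereal" and \<zeta>1 \<zeta>2 v1 v2 g1 g2 :: "real \<Rightarrow> 'a"
    and \<alpha>1 \<alpha>2 :: "real \<Rightarrow> real"
  defines "k \<equiv> \<lambda>\<tau>. \<bar>1 / \<alpha>1 \<tau> - 1 / \<alpha>2 \<tau>\<bar> + norm (g1 \<tau> - g2 \<tau>)"
  assumes proper: "proper_fun \<phi>"
    and controlled: "controlled_solution \<phi> D C \<alpha>0 \<alpha>1 g1 \<zeta>1 v1" "controlled_solution \<phi> D C \<alpha>0 \<alpha>2 g2 \<zeta>2 v2"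
    and \<alpha>0: "\<alpha>0 > 0" and CD: "0 \<le> C" "0 \<le> D" and L: "C + D * C \<le> L" "1 / \<alpha>0 \<le> L"
    and lipschitz: "K1-lipschitz_on {0..} \<zeta>1" "K2-lipschitz_on {0..} \<zeta>2"
    and primitive1: "\<And>s t. 0 \<le> s \<Longrightarrow> s \<le> t \<Longrightarrow> (v1 has_integral (\<zeta>1 t - \<zeta>1 s)) {s..t}"
    and primitive2: "\<And>s t. 0 \<le> s \<Longrightarrow> s \<le> t \<Longrightarrow> (v2 has_integral (\<zeta>2 t - \<zeta>2 s)) {s..t}"
    and k_integrable: "\<And>t. k integrable_on {0..t}"
    and t: "t \<ge> 0"
  shows "norm (\<zeta>1 t - \<zeta>2 t) \<le> norm (\<zeta>1 0 - \<zeta>2 0) + L * integral {0..t} k"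
proof -
  have L_nonneg: "0 \<le> L" using L(2) \<alpha>0 by (meson less_imp_le order_trans zero_le_divide_1_iff)
  have pointwise: "AE x in lborel. x > 0 \<longrightarrow>
      (v1 x - v2 x) \<bullet> (\<zeta>1 x - \<zeta>2 x) \<le> norm (\<zeta>1 x - \<zeta>2 x) * (L * k x) \<and>
      norm (v1 x - v2 x) \<le> 2 * ((C + D * C) / \<alpha>0) \<and> L * k x \<le> L * (2 / \<alpha>0 + 2 * C)"
    unfolding k_def by (rule controlled_solutions_pointwise[OF proper controlled \<alpha>0 L])
  have "norm (\<zeta>1 t - \<zeta>2 t) \<le> norm (\<zeta>1 0 - \<zeta>2 0) + integral {0..t} (\<lambda>\<tau>. L * k \<tau>)"
  proof (rule norm_growth_bound[OF lipschitz_on_diff[OF lipschitz] _ _ _ _ _ pointwise t])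
    show "((\<lambda>x. v1 x - v2 x) has_integral (\<zeta>1 t - \<zeta>2 t) - (\<zeta>1 s - \<zeta>2 s)) {s..t}" if "0 \<le> s" "s \<le> t" for s t
      using has_integral_diff[OF primitive1[OF that] primitive2[OF that]] by (simp add: algebra_simps)
  qed (use k_integrable L_nonneg \<alpha>0 CD in \<open>auto simp: k_def intro: integrable_on_mult_right\<close>)
  then show ?thesis by simp
qed

theorem proposition3p4:
  fixes D C \<alpha>0 :: real
  assumes "D > 0" "C > 0" "\<alpha>0 > 0"
  shows "\<exists>L. \<forall>(\<phi> :: 'a::euclidean_space \<Rightarrow> ereal) \<zeta>1 \<zeta>2 v1 v2 \<alpha>1 \<alpha>2 g1 g2 \<zeta>01 \<zeta>02.
     proper_fun \<phi> \<and> convex_fun \<phi> \<and> lsc_fun \<phi> \<and> property_X \<phi> D \<and>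
     \<zeta>01 \<in> DC_set \<phi> C \<and> \<zeta>02 \<in> DC_set \<phi> C \<and>
     Linf_loc \<alpha>1 \<and> Linf_loc \<alpha>2 \<and>
     (AE t in lborel. t > 0 \<longrightarrow> \<alpha>1 t \<ge> \<alpha>0) \<and> (AE t in lborel. t > 0 \<longrightarrow> \<alpha>2 t \<ge> \<alpha>0) \<and>
     set_borel_measurable lborel {0<..} g1 \<and> set_borel_measurable lborel {0<..} g2 \<and>
     (AE t in lborel. t > 0 \<longrightarrow> norm (g1 t) \<le> C) \<and> (AE t in lborel. t > 0 \<longrightarrow> norm (g2 t) \<le> C) \<and>
     W1inf \<zeta>1 \<and> W1inf \<zeta>2 \<and>
     is_solution \<phi> \<alpha>1 g1 \<zeta>01 \<zeta>1 v1 \<and> is_solution \<phi> \<alpha>2 g2 \<zeta>02 \<zeta>2 v2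
     \<longrightarrow> (\<forall>t>0. norm (\<zeta>1 t - \<zeta>2 t) \<le> norm (\<zeta>01 - \<zeta>02) +
            L * (LINT \<tau>:{0..t}|lborel. \<bar>1 / \<alpha>1 \<tau> - 1 / \<alpha>2 \<tau>\<bar> + norm (g1 \<tau> - g2 \<tau>)))"
proof (intro exI[of _ "max (C + D * C) (1 / \<alpha>0)"] allI impI, elim conjE, goal_cases)
  case (1 \<phi> \<zeta>1 \<zeta>2 v1 v2 \<alpha>1 \<alpha>2 g1 g2 \<zeta>01 \<zeta>02 t)
  let ?k = "\<lambda>\<tau>. \<bar>1 / \<alpha>1 \<tau> - 1 / \<alpha>2 \<tau>\<bar> + norm (g1 \<tau> - g2 \<tau>)"
  have controlled: "controlled_solution \<phi> D C \<alpha>0 \<alpha>1 g1 \<zeta>1 v1" "controlled_solution \<phi> D C \<alpha>0 \<alpha>2 g2 \<zeta>2 v2"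
    by (rule controlled_solution_of_property_X[OF \<open>property_X \<phi> D\<close> \<open>C > 0\<close> \<open>\<alpha>0 > 0\<close>]; fact 1)+
  obtain K1 K2 where lipschitz: "K1-lipschitz_on {0..} \<zeta>1" "K2-lipschitz_on {0..} \<zeta>2"
    using \<open>W1inf \<zeta>1\<close> \<open>W1inf \<zeta>2\<close> unfolding W1inf_def by blast
  have k_integrable: "set_integrable lborel {0..T} ?k" for T
    by (rule forcing_difference_integrable[OF \<open>\<alpha>0 > 0\<close>]; fact 1)
  have initial1: "\<zeta>1 0 = \<zeta>01"
    using \<open>is_solution \<phi> \<alpha>1 g1 \<zeta>01 \<zeta>1 v1\<close> unfolding is_solution_def by (rule conjunct1)
  have initial2: "\<zeta>2 0 = \<zeta>02"
    using \<open>is_solution \<phi> \<alpha>2 g2 \<zeta>02 \<zeta>2 v2\<close> unfolding is_solution_def by (rule conjunct1)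
  have "norm (\<zeta>1 t - \<zeta>2 t) \<le> norm (\<zeta>1 0 - \<zeta>2 0) + max (C + D * C) (1 / \<alpha>0) * integral {0..t} ?k"
  proof (rule controlled_solutions_comparison[OF \<open>proper_fun \<phi>\<close> controlled \<open>\<alpha>0 > 0\<close> _ _ _ _ lipschitz])
    show "(v1 has_integral \<zeta>1 t' - \<zeta>1 s) {s..t'}" "(v2 has_integral \<zeta>2 t' - \<zeta>2 s) {s..t'}"
      if "0 \<le> s" "s \<le> t'" for s t'
      using solution_increment_has_integral[OF \<open>is_solution \<phi> \<alpha>1 g1 \<zeta>01 \<zeta>1 v1\<close> that]
        solution_increment_has_integral[OF \<open>is_solution \<phi> \<alpha>2 g2 \<zeta>02 \<zeta>2 v2\<close> that] by blast+
    show "?k integrable_on {0..t'}" for t'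
      using set_borel_integral_eq_integral(1)[OF k_integrable] .
  qed (use assms \<open>t > 0\<close> in auto)
  then show ?case
    using set_borel_integral_eq_integral(2)[OF k_integrable] initial1 initial2 by simp
qed

end
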